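(* Let $\Theta=\{1,2\}$ and let $A$ be a finite set with $|A|=2$. Let $P$, $Q$, $R$ be experiments. Then $R$ is a Blackwell supremum of $P$ and $Q$ if and only if $\Lambda_R=\mathrm{co}(\Lambda_P\cup\Lambda_Q)$, where the feasible sets $\Lambda_P,\Lambda_Q,\Lambda_R$ are taken with respect to the action set $A$.
   Context: $\Theta$ is a finite set of states. A decision problem is a pair $(A,u)$ with $A$ a finite nonempty action set and $u:\Theta\times A\to\mathbb{R}$. An experiment is a map $P:\Theta\to\Delta(Y)$ with $Y$ a finite signal set. For a single experiment $P:\Theta\to\Delta(Y)$ its value in $(A,u)$ is $V(P;(A,u))=\max_{\sigma:Y\to\Delta(A)}\sum_{\theta}\sum_{y}P(y|\theta)\sum_a\sigma(a|y)u(\theta,a)$. An experiment $P$ is more informative than (Blackwell dominates) $Q$ if $V(P;(A,u))\ge V(Q;(A,u))$ for every decision problem $(A,u)$. An experiment $R$ is a Blackwell supremum of experiments $P_1,\dots,P_m$ if $R$ is more informative than every $P_j$, and every experiment $S$ that is more informative than all $P_j$ is also more informative than $R$. Given an action set $A$ and an experiment $P:\Theta\to\Delta(Y)$, its feasible set is $\Lambda_P=\{\lambda:\Theta\to\Delta(A)\mid \lambda(a|\theta)=\sum_y\sigma(a|y)P(y|\theta)\text{ for some }\sigma:Y\to\Delta(A)\}$, viewed as a subset of $\mathbb{R}^{\Theta\times A}$. *)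

theory Defs
  imports "HOL-Analysis.Analysis" "HOL-Library.Numeral_Type"
begin

text \<open>States form a finite type 's (its UNIV is Theta). Signal sets and the action
sets of decision problems are finite subsets of nat (every finite set is in bijection
with one). p is a probability distribution on the finite set Y.\<close>

definition is_dist :: "'b set \<Rightarrow> ('b \<Rightarrow> real) \<Rightarrow> bool" where
  "is_dist Y p \<longleftrightarrow> (\<forall>y\<in>Y. 0 \<le> p y) \<and> sum p Y = 1"

definition is_experiment :: "nat set \<Rightarrow> ('s::finite \<Rightarrow> nat \<Rightarrow> real) \<Rightarrow> bool" where
  "is_experiment Y P \<longleftrightarrow> finite Y \<and> (\<forall>\<theta>. is_dist Y (P \<theta>))"

definition strategy :: "nat set \<Rightarrow> 'b set \<Rightarrow> (nat \<Rightarrow> 'b \<Rightarrow> real) \<Rightarrow> bool" where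
  "strategy Y A \<sigma> \<longleftrightarrow> (\<forall>y\<in>Y. is_dist A (\<sigma> y))"

definition exp_value :: "nat set \<Rightarrow> ('s::finite \<Rightarrow> nat \<Rightarrow> real) \<Rightarrow> nat set \<Rightarrow> ('s \<Rightarrow> nat \<Rightarrow> real) \<Rightarrow> real" where
  "exp_value Y P A u = (SUP \<sigma>\<in>{\<sigma>. strategy Y A \<sigma>}.
      (\<Sum>\<theta>\<in>UNIV. \<Sum>y\<in>Y. P \<theta> y * (\<Sum>a\<in>A. \<sigma> y a * u \<theta> a)))"

definition more_informative :: "nat set \<Rightarrow> ('s::finite \<Rightarrow> nat \<Rightarrow> real) \<Rightarrow> nat set \<Rightarrow> ('s \<Rightarrow> nat \<Rightarrow> real) \<Rightarrow> bool" where
  "more_informative Y P Z Q \<longleftrightarrow>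
     (\<forall>(A::nat set) u. finite A \<and> A \<noteq> {} \<longrightarrow> exp_value Z Q A u \<le> exp_value Y P A u)"

definition blackwell_sup :: "nat set \<Rightarrow> ('s::finite \<Rightarrow> nat \<Rightarrow> real) \<Rightarrow> (nat set \<times> ('s \<Rightarrow> nat \<Rightarrow> real)) list \<Rightarrow> bool" where
  "blackwell_sup Y R Ps \<longleftrightarrow>
     (\<forall>(Z,Q)\<in>set Ps. more_informative Y R Z Q) \<and>
     (\<forall>W S. is_experiment W S \<and> (\<forall>(Z,Q)\<in>set Ps. more_informative W S Z Q)
            \<longrightarrow> more_informative W S Y R)"

definition feasible :: "nat set \<Rightarrow> ('s::finite \<Rightarrow> nat \<Rightarrow> real) \<Rightarrow> (real^('s \<times> 'a::finite)) set" where
  "feasible Y P = {(\<chi> i. \<Sum>y\<in>Y. \<sigma> y (snd i) * P (fst i) y) | \<sigma>. strategy Y (UNIV::'a set) \<sigma>}"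

end

(*
  For two states let G_P(e1, e2) = sum_y max(0, e1 P(y|1) + e2 P(y|2)) be the value of the
  problem "act for payoff e_theta or abstain". Conditional on a signal, the value of a finite
  decision problem is a convex piecewise linear function of the posterior; on the finitely many
  posteriors that occur it is an affine function plus a nonnegative combination of hinges, so
  V(P; (A, u)) is a constant plus a nonnegative combination of values of G_P. Hence P is more
  informative than Q iff G_P >= G_Q.

  Up to an affine change that does not depend on the experiment, each direction e corresponds to
  a threshold t in (0, 1), where G becomes the convex curve H(t) = G(-t, 1 - t) with H(0) = 1,
  H(1) = 0. For every admissible value v at t, a three-signal experiment realizes the polygon
  through (0, 1), (t, v), (1, 0), which dominates every such curve not exceeding v at t. So an
  upper bound of P and Q can attain max(G_P, G_Q) in any single direction, and R is a supremum
  iff G_R = max(G_P, G_Q).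

  The support function of Lambda_P in direction z is the value of the problem with payoffs z;
  with two actions it is a linear term plus G_P evaluated at the difference of the two payoff
  columns. Feasible sets are compact and convex, so Lambda_R = co(Lambda_P u Lambda_Q) iff their
  support functions satisfy h_R = max(h_P, h_Q), which is again G_R = max(G_P, G_Q).
*)
theory Submission
  imports Defs
begin

section \<open>Values of decision problems\<close>

lemma experiment_finite: "is_experiment Y P \<Longrightarrow> finite Y"
  by (simp add: is_experiment_def)

lemma experiment_nonneg: "is_experiment Y P \<Longrightarrow> y \<in> Y \<Longrightarrow> 0 \<le> P \<theta> y"
  by (simp add: is_experiment_def is_dist_def)

lemma experiment_sum: "is_experiment Y P \<Longrightarrow> sum (P \<theta>) Y = 1"
  by (simp add: is_experiment_def is_dist_def)

lemma experiment_sum_linear: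
  "is_experiment Y (P :: 2 \<Rightarrow> nat \<Rightarrow> real) \<Longrightarrow> (\<Sum>y\<in>Y. c1 * P 1 y + c2 * P 2 y) = c1 + c2"
  by (simp add: sum.distrib sum_distrib_left[symmetric] experiment_sum)

lemma strategy_payoff_le_sum_Max:
  assumes \<sigma>: "strategy Y A \<sigma>" and A: "finite A"
  shows "(\<Sum>y\<in>Y. \<Sum>a\<in>A. \<sigma> y a * w y a) \<le> (\<Sum>y\<in>Y. Max (w y ` A))"
proof (rule sum_mono)
  fix y assume y: "y \<in> Y"
  have d: "\<forall>a\<in>A. 0 \<le> \<sigma> y a" "sum (\<sigma> y) A = 1"
    using \<sigma> y by (auto simp: strategy_def is_dist_def)
  have "(\<Sum>a\<in>A. \<sigma> y a * w y a) \<le> (\<Sum>a\<in>A. \<sigma> y a * Max (w y ` A))"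
    using d A by (intro sum_mono mult_left_mono) auto
  also have "\<dots> = Max (w y ` A)"
    using d by (simp add: sum_distrib_right[symmetric])
  finally show "(\<Sum>a\<in>A. \<sigma> y a * w y a) \<le> Max (w y ` A)" .
qed

lemma strategy_payoff_attains_sum_Max:
  assumes A: "finite A" "A \<noteq> {}"
  obtains \<sigma> where "strategy Y A \<sigma>" "(\<Sum>y\<in>Y. \<Sum>a\<in>A. \<sigma> y a * w y a) = (\<Sum>y\<in>Y. Max (w y ` A))"
proof -
  have "\<forall>y. \<exists>a\<in>A. w y a = Max (w y ` A)"
    using A by (metis (no_types, lifting) Max_in finite_imageI image_iff image_is_empty)
  then obtain best where best: "\<And>y. best y \<in> A" "\<And>y. w y (best y) = Max (w y ` A)"
    by metis
  define \<sigma> where "\<sigma> y a = (if a = best y then 1 else 0 :: real)" for y a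
  have "strategy Y A \<sigma>"
    using best A by (auto simp: strategy_def is_dist_def \<sigma>_def)
  moreover have "(\<Sum>y\<in>Y. \<Sum>a\<in>A. \<sigma> y a * w y a) = (\<Sum>y\<in>Y. Max (w y ` A))"
    unfolding \<sigma>_def using best A by (simp add: if_distrib[where f="\<lambda>c. c * _"] cong: if_cong)
  ultimately show thesis by (rule that)
qed

lemma exp_value_eq_sum_Max:
  assumes A: "finite A" "A \<noteq> {}"
  shows "exp_value Y P A u = (\<Sum>y\<in>Y. Max ((\<lambda>a. \<Sum>\<theta>\<in>UNIV. P \<theta> y * u \<theta> a) ` A))"
proof -
  define w where "w y a = (\<Sum>\<theta>\<in>UNIV. P \<theta> y * u \<theta> a)" for y a
  have payoff: "(\<Sum>\<theta>\<in>UNIV. \<Sum>y\<in>Y. P \<theta> y * (\<Sum>a\<in>A. \<sigma> y a * u \<theta> a))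
      = (\<Sum>y\<in>Y. \<Sum>a\<in>A. \<sigma> y a * w y a)" for \<sigma> :: "nat \<Rightarrow> nat \<Rightarrow> real"
  proof -
    have "(\<Sum>\<theta>\<in>UNIV. \<Sum>y\<in>Y. P \<theta> y * (\<Sum>a\<in>A. \<sigma> y a * u \<theta> a))
        = (\<Sum>\<theta>\<in>UNIV. \<Sum>y\<in>Y. \<Sum>a\<in>A. \<sigma> y a * (P \<theta> y * u \<theta> a))"
      unfolding sum_distrib_left by (simp only: mult.left_commute)
    also have "\<dots> = (\<Sum>y\<in>Y. \<Sum>\<theta>\<in>UNIV. \<Sum>a\<in>A. \<sigma> y a * (P \<theta> y * u \<theta> a))"
      by (rule sum.swap)
    also have "\<dots> = (\<Sum>y\<in>Y. \<Sum>a\<in>A. \<Sum>\<theta>\<in>UNIV. \<sigma> y a * (P \<theta> y * u \<theta> a))"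
      by (intro sum.cong refl) (rule sum.swap)
    finally show ?thesis unfolding w_def sum_distrib_left .
  qed
  obtain \<sigma> where "strategy Y A \<sigma>" "(\<Sum>y\<in>Y. \<Sum>a\<in>A. \<sigma> y a * w y a) = (\<Sum>y\<in>Y. Max (w y ` A))"
    using strategy_payoff_attains_sum_Max[OF A] by blast
  then show ?thesis
    unfolding exp_value_def payoff w_def[symmetric]
    by (intro cSup_eq_maximum) (auto intro!: image_eqI strategy_payoff_le_sum_Max[OF _ A(1)])
qed

definition binary_value :: "nat set \<Rightarrow> (2 \<Rightarrow> nat \<Rightarrow> real) \<Rightarrow> real \<Rightarrow> real \<Rightarrow> real" where
  "binary_value Y P e1 e2 = (\<Sum>y\<in>Y. max 0 (e1 * P 1 y + e2 * P 2 y))"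

lemma exp_value_act_or_abstain:
  fixes P :: "2 \<Rightarrow> nat \<Rightarrow> real" and e1 e2 :: real
  defines "u \<equiv> \<lambda>\<theta> a. if a = 0 then (if \<theta> = 1 then e1 else e2) else 0"
  shows "exp_value Y P {0, 1} u = binary_value Y P e1 e2"
  unfolding u_def binary_value_def
  by (subst exp_value_eq_sum_Max) (auto simp: sum_2 max.commute mult.commute)

lemma more_informative_imp_binary_value_le:
  "more_informative Y P Z Q \<Longrightarrow> binary_value Z Q e1 e2 \<le> binary_value Y P e1 e2"
  unfolding more_informative_def
  by (metis exp_value_act_or_abstain finite.emptyI finite_insert insert_not_empty)

lemma binary_value_nonneg: "0 \<le> binary_value Y P e1 e2"
  unfolding binary_value_def by (intro sum_nonneg) simp

lemma binary_value_ge_sum: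
  assumes "is_experiment Y P"
  shows "e1 + e2 \<le> binary_value Y P e1 e2"
proof -
  have "e1 + e2 = (\<Sum>y\<in>Y. e1 * P 1 y + e2 * P 2 y)"
    using experiment_sum_linear[OF assms] by simp
  also have "\<dots> \<le> binary_value Y P e1 e2"
    unfolding binary_value_def by (intro sum_mono) simp
  finally show ?thesis .
qed

lemma binary_value_le:
  assumes E: "is_experiment Y P"
  shows "binary_value Y P e1 e2 \<le> max 0 e1 + max 0 e2"
proof -
  have "binary_value Y P e1 e2 \<le> (\<Sum>y\<in>Y. max 0 e1 * P 1 y + max 0 e2 * P 2 y)"
    unfolding binary_value_def
  proof (rule sum_mono)
    fix y assume "y \<in> Y"
    then have "0 \<le> P 1 y" "0 \<le> P 2 y"
      using experiment_nonneg[OF E] by auto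
    then show "max 0 (e1 * P 1 y + e2 * P 2 y) \<le> max 0 e1 * P 1 y + max 0 e2 * P 2 y"
      by (simp add: add_mono mult_right_mono)
  qed
  also have "\<dots> = max 0 e1 + max 0 e2"
    by (rule experiment_sum_linear[OF E])
  finally show ?thesis .
qed

lemma binary_value_uminus:
  assumes "is_experiment Y P"
  shows "binary_value Y P e1 e2 = binary_value Y P (- e1) (- e2) + e1 + e2"
proof -
  have "binary_value Y P e1 e2
      = (\<Sum>y\<in>Y. max 0 (- e1 * P 1 y + - e2 * P 2 y) + (e1 * P 1 y + e2 * P 2 y))"
    unfolding binary_value_def by (intro sum.cong) auto
  also have "\<dots> = binary_value Y P (- e1) (- e2) + e1 + e2"
    using experiment_sum_linear[OF assms, of e1 e2] by (simp add: binary_value_def sum.distrib)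
  finally show ?thesis .
qed

lemma binary_value_scale:
  assumes "0 \<le> k"
  shows "binary_value Y P (k * e1) (k * e2) = k * binary_value Y P e1 e2"
  unfolding binary_value_def sum_distrib_left
  using assms by (intro sum.cong) (auto simp: max_mult_distrib_left algebra_simps)

section \<open>Hinge interpolation and the Blackwell order\<close>

lemma convex_on_Max_affine:
  fixes \<alpha> \<beta> :: "'b \<Rightarrow> real"
  assumes A: "finite A" "A \<noteq> {}"
  shows "convex_on UNIV (\<lambda>t. Max ((\<lambda>a. \<alpha> a + \<beta> a * t) ` A))"
proof (rule convex_onI)
  fix l x y :: real assume l: "0 < l" "l < 1"
  let ?g = "\<lambda>t. Max ((\<lambda>a. \<alpha> a + \<beta> a * t) ` A)"
  have ge: "\<alpha> a + \<beta> a * t \<le> ?g t" if "a \<in> A" for a t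
    using A that by (intro Max_ge) auto
  have "?g ((1 - l) * x + l * y) \<in> (\<lambda>a. \<alpha> a + \<beta> a * ((1 - l) * x + l * y)) ` A"
    using A by (intro Max_in) auto
  then obtain a where a: "a \<in> A" "?g ((1 - l) *\<^sub>R x + l *\<^sub>R y) = \<alpha> a + \<beta> a * ((1 - l) * x + l * y)"
    by auto
  have "\<alpha> a + \<beta> a * ((1 - l) * x + l * y) = (1 - l) * (\<alpha> a + \<beta> a * x) + l * (\<alpha> a + \<beta> a * y)"
    by (simp add: algebra_simps)
  also have "\<dots> \<le> (1 - l) * ?g x + l * ?g y"
    using l ge[OF a(1)] by (intro add_mono mult_left_mono) auto
  finally show "?g ((1 - l) *\<^sub>R x + l *\<^sub>R y) \<le> (1 - l) * ?g x + l * ?g y"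
    using a(2) by simp
qed simp

lemma convex_on_secant_mono:
  fixes f :: "real \<Rightarrow> real"
  assumes "convex_on UNIV f" "x < y" "y < z"
  shows "(f y - f x) * (z - y) \<le> (f z - f y) * (y - x)"
proof -
  have "(f x - f y) / (x - y) \<le> (f y - f z) / (y - z)"
    using convex_on_slope_le[OF assms(1) _ _ assms(2,3)] by (meson UNIV_I order_trans)
  then show ?thesis
    using assms(2,3) by (simp add: divide_le_eq le_divide_eq field_simps)
qed

lemma convex_on_hinge_interpolation_insert:
  fixes f :: "real \<Rightarrow> real"
  assumes f: "convex_on UNIV f" and m: "m \<in> T" "\<forall>t\<in>T. t \<le> m" "m < M"
    and c: "\<forall>k<n. 0 \<le> c k \<and> \<tau> k \<le> m"
    and rep: "\<forall>t\<in>T. f t = a + b * t + (\<Sum>k<n. c k * max 0 (t - \<tau> k))"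
    and slope: "\<forall>x>m. (b + (\<Sum>k<n. c k)) * (x - m) \<le> f x - f m"
  shows "\<exists>c' \<tau>'. (\<forall>k<Suc n. 0 \<le> c' k \<and> \<tau>' k \<le> M) \<and>
    (\<forall>t\<in>insert M T. f t = a + b * t + (\<Sum>k<Suc n. c' k * max 0 (t - \<tau>' k))) \<and>
    (\<forall>x>M. (b + (\<Sum>k<Suc n. c' k)) * (x - M) \<le> f x - f M)"
proof -
  define s where "s = b + (\<Sum>k<n. c k)"
  define \<sigma> where "\<sigma> = (f M - f m) / (M - m)"
  have s_le: "s \<le> \<sigma>"
    using slope m(3) unfolding \<sigma>_def s_def by (simp add: le_divide_eq)
  have \<sigma>_slope: "\<sigma> * (x - M) \<le> f x - f M" if "M < x" for x
    using convex_on_secant_mono[OF f m(3) that] m(3) unfolding \<sigma>_def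
    by (simp add: divide_le_eq mult.commute)
  have "(\<Sum>k<n. c k * max 0 (M - \<tau> k)) = (\<Sum>k<n. c k * (m - \<tau> k) + c k * (M - m))"
    using c m(3) by (intro sum.cong) (auto simp: algebra_simps)
  also have "\<dots> = (\<Sum>k<n. c k * max 0 (m - \<tau> k)) + (\<Sum>k<n. c k) * (M - m)"
    using c by (simp add: sum.distrib sum_distrib_right)
  finally have rep_M: "a + b * M + (\<Sum>k<n. c k * max 0 (M - \<tau> k)) = f m + s * (M - m)"
    using rep m(1) unfolding s_def by (simp add: algebra_simps)
  define c' where "c' = c(n := \<sigma> - s)"
  define \<tau>' where "\<tau>' = \<tau>(n := m)"
  have new: "(\<Sum>k<Suc n. c' k * max 0 (t - \<tau>' k))
      = (\<Sum>k<n. c k * max 0 (t - \<tau> k)) + (\<sigma> - s) * max 0 (t - m)" for t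
  proof -
    have "(\<Sum>k<n. c' k * max 0 (t - \<tau>' k)) = (\<Sum>k<n. c k * max 0 (t - \<tau> k))"
      by (intro sum.cong) (auto simp: c'_def \<tau>'_def)
    then show ?thesis by (simp add: c'_def \<tau>'_def)
  qed
  have "(\<sigma> - s) * (M - m) = f M - f m - s * (M - m)"
    using m(3) unfolding \<sigma>_def by (simp add: field_simps)
  then have "f M = a + b * M + (\<Sum>k<Suc n. c' k * max 0 (M - \<tau>' k))"
    using rep_M m(3) unfolding new by simp
  moreover have "f t = a + b * t + (\<Sum>k<Suc n. c' k * max 0 (t - \<tau>' k))" if "t \<in> T" for t
    using rep m(2) that unfolding new by simp
  moreover have "0 \<le> c' k \<and> \<tau>' k \<le> M" if "k < Suc n" for k
    using c s_le m(3) that by (cases "k = n") (auto simp: c'_def \<tau>'_def less_Suc_eq)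
  moreover have "b + (\<Sum>k<Suc n. c' k) = \<sigma>"
    using sum.cong[of "{..<n}" "{..<n}" c' c] by (simp add: c'_def s_def)
  ultimately show ?thesis
    using \<sigma>_slope by (intro exI[of _ c'] exI[of _ \<tau>']) auto
qed

text \<open>The last conjunct, a lower bound on the final slope, is what allows a point further
  to the right to be added with a nonnegative new hinge coefficient.\<close>

lemma convex_on_hinge_interpolation_right:
  fixes f :: "real \<Rightarrow> real"
  assumes f: "convex_on UNIV f" and T: "finite T" "T \<noteq> {}"
  shows "\<exists>a b (n::nat) c \<tau>. (\<forall>k<n. 0 \<le> c k \<and> \<tau> k \<le> Max T) \<and>
    (\<forall>t\<in>T. f t = a + b * t + (\<Sum>k<n. c k * max 0 (t - \<tau> k))) \<and>
    (\<forall>x>Max T. (b + (\<Sum>k<n. c k)) * (x - Max T) \<le> f x - f (Max T))"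
  using T
proof (induction T rule: finite_linorder_max_induct)
  case empty
  then show ?case by simp
next
  case (insert M T0)
  have Max_insert: "Max (insert M T0) = M"
    using insert.hyps by (intro Max_eqI) auto
  show ?case
  proof (cases "T0 = {}")
    case True
    have slope: "(f M - f (M - 1)) * (x - M) \<le> f x - f M" if "M < x" for x
      using convex_on_secant_mono[OF f, of "M - 1" M x] that by simp
    show ?thesis
      by (rule exI[of _ "f M - (f M - f (M - 1)) * M"], rule exI[of _ "f M - f (M - 1)"],
          rule exI[of _ 0]) (use True Max_insert slope in auto)
  next
    case False
    then obtain a b and n :: nat and c \<tau> where
      c: "\<forall>k<n. 0 \<le> c k \<and> \<tau> k \<le> Max T0" and
      rep: "\<forall>t\<in>T0. f t = a + b * t + (\<Sum>k<n. c k * max 0 (t - \<tau> k))" and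
      slope: "\<forall>x>Max T0. (b + (\<Sum>k<n. c k)) * (x - Max T0) \<le> f x - f (Max T0)"
      using insert.IH by blast
    have "Max T0 \<in> T0" "\<forall>t\<in>T0. t \<le> Max T0" "Max T0 < M"
      using False insert.hyps by auto
    from convex_on_hinge_interpolation_insert[OF f this c rep slope]
    show ?thesis
      unfolding Max_insert by blast
  qed
qed

lemma convex_on_hinge_interpolation:
  fixes f :: "real \<Rightarrow> real"
  assumes "convex_on UNIV f" "finite T"
  obtains a b and n :: nat and c \<tau> where "\<forall>k<n. 0 \<le> c k"
    and "\<forall>t\<in>T. f t = a + b * t + (\<Sum>k<n. c k * max 0 (t - \<tau> k))"
proof (cases "T = {}")
  case True
  then show ?thesis using that[of 0] by simp
next
  case False
  then show ?thesis
    using convex_on_hinge_interpolation_right[OF assms False] that by blast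
qed

lemma Max_linear_eq_hinge_sum:
  fixes u :: "2 \<Rightarrow> 'b \<Rightarrow> real"
  assumes A: "finite A" "A \<noteq> {}" and x: "0 \<le> x1" "0 \<le> x2" and c: "\<forall>k<n. 0 \<le> c k"
    and rep: "x1 + x2 \<noteq> 0 \<Longrightarrow> Max ((\<lambda>a. u 1 a + (u 2 a - u 1 a) * (x2 / (x1 + x2))) ` A)
      = a + b * (x2 / (x1 + x2)) + (\<Sum>k<n. c k * max 0 (x2 / (x1 + x2) - \<tau> k))"
  shows "Max ((\<lambda>a. x1 * u 1 a + x2 * u 2 a) ` A)
    = a * x1 + (a + b) * x2 + (\<Sum>k<n. max 0 (- c k * \<tau> k * x1 + (c k - c k * \<tau> k) * x2))"
proof (cases "x1 + x2 = 0")
  case True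
  then have "x1 = 0" "x2 = 0" using x by auto
  moreover have "(\<lambda>a. 0 * u 1 a + 0 * u 2 a) ` A = {0 :: real}" using A by auto
  ultimately show ?thesis by simp
next
  case False
  define m where "m = x1 + x2"
  define t where "t = x2 / m"
  have m: "0 < m" using False x unfolding m_def by auto
  have x_eq: "x2 = m * t" "x1 = m - m * t" using m unfolding t_def m_def by auto
  have "Max ((\<lambda>a. x1 * u 1 a + x2 * u 2 a) ` A) = Max ((\<lambda>z. m * z) ` (\<lambda>a. u 1 a + (u 2 a - u 1 a) * t) ` A)"
    unfolding image_image x_eq by (simp add: algebra_simps)
  also have "\<dots> = m * Max ((\<lambda>a. u 1 a + (u 2 a - u 1 a) * t) ` A)"
    using m A by (intro mono_Max_commute[symmetric] monoI mult_left_mono) auto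
  also have "\<dots> = m * (a + b * t + (\<Sum>k<n. c k * max 0 (t - \<tau> k)))"
    using rep False unfolding t_def m_def by simp
  also have "\<dots> = a * m + b * (m * t) + (\<Sum>k<n. max 0 ((m * c k) * (t - \<tau> k)))"
  proof -
    have "m * (c k * max 0 (t - \<tau> k)) = max 0 ((m * c k) * (t - \<tau> k))" if "k < n" for k
      using m c that by (simp add: max_mult_distrib_left)
    then show ?thesis
      by (simp add: sum_distrib_left distrib_left mult.assoc mult.left_commute)
  qed
  also have "\<dots> = a * x1 + (a + b) * x2 + (\<Sum>k<n. max 0 (- c k * \<tau> k * x1 + (c k - c k * \<tau> k) * x2))"
    unfolding x_eq by (simp add: algebra_simps)
  finally show ?thesis .
qed

lemma exp_value_eq_hinge_sum:
  fixes R :: "2 \<Rightarrow> nat \<Rightarrow> real" and u :: "2 \<Rightarrow> nat \<Rightarrow> real"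
  assumes E: "is_experiment X R" and A: "finite A" "A \<noteq> {}" and c: "\<forall>k<n. 0 \<le> c k"
    and rep: "\<And>y. y \<in> X \<Longrightarrow> Max ((\<lambda>a. u 1 a + (u 2 a - u 1 a) * (R 2 y / (R 1 y + R 2 y))) ` A)
      = a + b * (R 2 y / (R 1 y + R 2 y)) + (\<Sum>k<n. c k * max 0 (R 2 y / (R 1 y + R 2 y) - \<tau> k))"
  shows "exp_value X R A u = a + (a + b) + (\<Sum>k<n. binary_value X R (- c k * \<tau> k) (c k - c k * \<tau> k))"
proof -
  have "exp_value X R A u = (\<Sum>y\<in>X. a * R 1 y + (a + b) * R 2 y
      + (\<Sum>k<n. max 0 (- c k * \<tau> k * R 1 y + (c k - c k * \<tau> k) * R 2 y)))"
    unfolding exp_value_eq_sum_Max[OF A] sum_2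
  proof (rule sum.cong[OF refl])
    fix y assume y: "y \<in> X"
    show "Max ((\<lambda>a. R 1 y * u 1 a + R 2 y * u 2 a) ` A) = a * R 1 y + (a + b) * R 2 y
        + (\<Sum>k<n. max 0 (- c k * \<tau> k * R 1 y + (c k - c k * \<tau> k) * R 2 y))"
      by (rule Max_linear_eq_hinge_sum[OF A experiment_nonneg[OF E y] experiment_nonneg[OF E y] c])
        (rule rep[OF y])
  qed
  also have "\<dots> = a + (a + b) + (\<Sum>k<n. binary_value X R (- c k * \<tau> k) (c k - c k * \<tau> k))"
    unfolding binary_value_def sum.distrib[of "\<lambda>y. a * R 1 y + (a + b) * R 2 y"]
      experiment_sum_linear[OF E]
    by (rule arg_cong[where f="\<lambda>z. _ + z"], rule sum.swap)
  finally show ?thesis .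
qed

lemma binary_value_le_imp_more_informative:
  assumes P: "is_experiment Y P" and Q: "is_experiment Z Q"
    and le: "\<And>e1 e2. binary_value Z Q e1 e2 \<le> binary_value Y P e1 e2"
  shows "more_informative Y P Z Q"
  unfolding more_informative_def
proof (intro allI impI, elim conjE)
  fix A :: "nat set" and u :: "2 \<Rightarrow> nat \<Rightarrow> real"
  assume A: "finite A" "A \<noteq> {}"
  define posterior where "posterior R y = R 2 y / (R 1 y + R 2 y)" for R :: "2 \<Rightarrow> nat \<Rightarrow> real" and y
  have T: "finite (posterior P ` Y \<union> posterior Q ` Z)"
    using experiment_finite[OF P] experiment_finite[OF Q] by simp
  obtain a b and n :: nat and c \<tau> where c: "\<forall>k<n. 0 \<le> c k"
    and rep: "\<forall>t\<in>posterior P ` Y \<union> posterior Q ` Z. Max ((\<lambda>a. u 1 a + (u 2 a - u 1 a) * t) ` A)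
      = a + b * t + (\<Sum>k<n. c k * max 0 (t - \<tau> k))"
    by (rule convex_on_hinge_interpolation[OF convex_on_Max_affine[OF A] T])
  have "exp_value Z Q A u = a + (a + b) + (\<Sum>k<n. binary_value Z Q (- c k * \<tau> k) (c k - c k * \<tau> k))"
    using rep unfolding posterior_def by (intro exp_value_eq_hinge_sum[OF Q A c]) blast
  also have "\<dots> \<le> a + (a + b) + (\<Sum>k<n. binary_value Y P (- c k * \<tau> k) (c k - c k * \<tau> k))"
    using le by (intro add_left_mono sum_mono)
  also have "\<dots> = exp_value Y P A u"
    using rep unfolding posterior_def by (intro exp_value_eq_hinge_sum[OF P A c, symmetric]) blast
  finally show "exp_value Z Q A u \<le> exp_value Y P A u" .
qed

lemma more_informative_iff_binary_value_le:
  assumes "is_experiment Y P" "is_experiment Z Q"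
  shows "more_informative Y P Z Q \<longleftrightarrow> (\<forall>e1 e2. binary_value Z Q e1 e2 \<le> binary_value Y P e1 e2)"
  using binary_value_le_imp_more_informative[OF assms] more_informative_imp_binary_value_le by blast

section \<open>Least upper bounds of two experiments\<close>

definition threshold_value :: "nat set \<Rightarrow> (2 \<Rightarrow> nat \<Rightarrow> real) \<Rightarrow> real \<Rightarrow> real" where
  "threshold_value Y P t = binary_value Y P (- t) (1 - t)"

lemma convex_on_threshold_value: "convex_on UNIV (threshold_value Y P)"
proof (rule convex_onI)
  fix l x z :: real assume l: "0 < l" "l < 1"
  have "max 0 (- ((1 - l) * x + l * z) * P 1 y + (1 - ((1 - l) * x + l * z)) * P 2 y)
      \<le> (1 - l) * max 0 (- x * P 1 y + (1 - x) * P 2 y) + l * max 0 (- z * P 1 y + (1 - z) * P 2 y)"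
    for y
  proof -
    have "- ((1 - l) * x + l * z) * P 1 y + (1 - ((1 - l) * x + l * z)) * P 2 y
        = (1 - l) * (- x * P 1 y + (1 - x) * P 2 y) + l * (- z * P 1 y + (1 - z) * P 2 y)"
      by (simp add: algebra_simps)
    then show ?thesis
      using l by (simp add: add_mono mult_left_mono)
  qed
  then show "threshold_value Y P ((1 - l) *\<^sub>R x + l *\<^sub>R z)
      \<le> (1 - l) * threshold_value Y P x + l * threshold_value Y P z"
    unfolding threshold_value_def binary_value_def sum_distrib_left sum.distrib[symmetric]
    by (simp add: sum_mono)
qed simp

lemma threshold_value_0: "is_experiment Y P \<Longrightarrow> threshold_value Y P 0 = 1"
  unfolding threshold_value_def binary_value_def
  by (simp add: experiment_nonneg experiment_sum cong: sum.cong)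

lemma threshold_value_1: "is_experiment Y P \<Longrightarrow> threshold_value Y P 1 = 0"
  unfolding threshold_value_def binary_value_def
  by (simp add: experiment_nonneg)

lemma threshold_value_bounds:
  assumes "is_experiment Y P" "0 \<le> t" "t \<le> 1"
  shows "1 - 2 * t \<le> threshold_value Y P t" "0 \<le> threshold_value Y P t" "threshold_value Y P t \<le> 1 - t"
  using binary_value_ge_sum[OF assms(1), of "- t" "1 - t"] binary_value_nonneg[of Y P "- t" "1 - t"]
    binary_value_le[OF assms(1), of "- t" "1 - t"] assms(2,3)
  unfolding threshold_value_def by auto

lemma binary_value_eq_threshold_value_affine:
  fixes e1 e2 :: real
  obtains t k c where "0 < t" "t < 1" "0 \<le> k"
    and "\<And>Y P. is_experiment Y P \<Longrightarrow> binary_value Y P e1 e2 = k * threshold_value Y P t + c"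
proof -
  have scaled: "binary_value Y P f1 f2 = (f2 - f1) * threshold_value Y P (- f1 / (f2 - f1))"
    if "f1 < 0" "0 < f2" for Y P and f1 f2 :: real
  proof -
    define t where "t = - f1 / (f2 - f1)"
    have f: "(f2 - f1) * - t = f1" "(f2 - f1) * (1 - t) = f2"
      using that by (auto simp: t_def field_simps)
    have "binary_value Y P ((f2 - f1) * - t) ((f2 - f1) * (1 - t)) = (f2 - f1) * threshold_value Y P t"
      unfolding threshold_value_def using that by (intro binary_value_scale) simp
    from this[unfolded f] show ?thesis
      by (simp only: t_def)
  qed
  consider "0 \<le> e1" "0 \<le> e2" | "e1 \<le> 0" "e2 \<le> 0" | "e1 < 0" "0 < e2" | "0 < e1" "e2 < 0"
    by linarith
  then show thesis
  proof cases
    case 1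
    have "binary_value Y P e1 e2 = e1 + e2" if "is_experiment Y P" for Y P
      using 1 experiment_nonneg[OF that] experiment_sum_linear[OF that, of e1 e2]
      unfolding binary_value_def by (simp cong: sum.cong)
    then show thesis by (intro that[of "1 / 2" 0 "e1 + e2"]) auto
  next
    case 2
    have "binary_value Y P e1 e2 = 0" if "is_experiment Y P" for Y P
      using 2 experiment_nonneg[OF that] unfolding binary_value_def
      by (intro sum.neutral ballI) (simp add: add_nonpos_nonpos mult_nonpos_nonneg)
    then show thesis by (intro that[of "1 / 2" 0 0]) auto
  next
    case 3
    then show thesis
      using scaled[OF 3] by (intro that[of "- e1 / (e2 - e1)" "e2 - e1" 0]) (auto simp: field_simps)
  next
    case 4
    then show thesis
      using scaled[of "- e1" "- e2"] binary_value_uminus[of _ _ e1 e2]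
      by (intro that[of "e1 / (e1 - e2)" "e1 - e2" "e1 + e2"]) (auto simp: field_simps)
  qed
qed

lemma binary_value_le_if_threshold_value_le:
  assumes X: "is_experiment X R" and S: "is_experiment W S"
    and le: "\<And>t. 0 < t \<Longrightarrow> t < 1 \<Longrightarrow> threshold_value X R t \<le> threshold_value W S t"
  shows "binary_value X R e1 e2 \<le> binary_value W S e1 e2"
proof -
  obtain t k c where t: "0 < t" "t < 1" "0 \<le> k"
    and eq: "\<And>Y P. is_experiment Y P \<Longrightarrow> binary_value Y P e1 e2 = k * threshold_value Y P t + c"
    using binary_value_eq_threshold_value_affine[of e1 e2] by blast
  show ?thesis
    unfolding eq[OF X] eq[OF S] using le[OF t(1,2)] t(3) by (simp add: mult_left_mono)
qed

definition kink :: "real \<Rightarrow> real \<Rightarrow> real \<Rightarrow> real" where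
  "kink t0 v t = (if t \<le> t0 then 1 - (1 - v) * t / t0 else v * (1 - t) / (1 - t0))"

lemma threshold_value_le_kink:
  assumes X: "is_experiment X R" and t0: "0 < t0" "t0 < 1" and v: "threshold_value X R t0 \<le> v"
    and t: "0 \<le> t" "t \<le> 1"
  shows "threshold_value X R t \<le> kink t0 v t"
proof (cases "t \<le> t0")
  case True
  define l where "l = t / t0"
  have l: "0 \<le> l" "l \<le> 1" "t = (1 - l) * 0 + l * t0"
    using t t0 True unfolding l_def by (auto simp: field_simps)
  have "threshold_value X R t \<le> (1 - l) * threshold_value X R 0 + l * threshold_value X R t0"
    using convex_onD[OF convex_on_threshold_value l(1,2), of 0 t0] l(3) by simp
  also have "\<dots> \<le> (1 - l) * 1 + l * v"
    using threshold_value_0[OF X] v l(1) by (simp add: mult_left_mono)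
  also have "\<dots> = kink t0 v t"
    using True t0 unfolding kink_def l_def by (simp add: field_simps)
  finally show ?thesis .
next
  case False
  define l where "l = (t - t0) / (1 - t0)"
  have "l * (1 - t0) = t - t0"
    using t0 unfolding l_def by simp
  then have t_eq: "t = (1 - l) * t0 + l * 1"
    by (simp add: algebra_simps)
  have l: "0 \<le> l" "l \<le> 1"
    using t t0 False unfolding l_def by (auto simp: field_simps)
  have "threshold_value X R t \<le> (1 - l) * threshold_value X R t0 + l * threshold_value X R 1"
    using convex_onD[OF convex_on_threshold_value l, of t0 1] t_eq by simp
  also have "\<dots> \<le> (1 - l) * v"
    using threshold_value_1[OF X] v l(2) by (simp add: mult_left_mono)
  also have "\<dots> = kink t0 v t"
    using False t0 unfolding kink_def l_def by (simp add: field_simps)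
  finally show ?thesis .
qed

definition three_signal :: "real \<Rightarrow> real \<Rightarrow> 2 \<Rightarrow> nat \<Rightarrow> real" where
  "three_signal b g \<theta> y = (if \<theta> = 1 then (if y = 0 then 1 - b else if y = 1 then b else 0)
    else (if y = 0 then 0 else if y = 1 then 1 - g else g))"

lemma is_experiment_three_signal:
  assumes "0 \<le> b" "b \<le> 1" "0 \<le> g" "g \<le> 1"
  shows "is_experiment {0, 1, 2} (three_signal b g)"
  unfolding is_experiment_def is_dist_def
proof (intro conjI allI)
  fix \<theta> :: 2
  show "\<forall>y\<in>{0, 1, 2}. 0 \<le> three_signal b g \<theta> y" "sum (three_signal b g \<theta>) {0, 1, 2} = 1"
    using assms unfolding three_signal_def by auto
qed simp

lemma threshold_value_three_signal:
  assumes "0 \<le> b" "b \<le> 1" "0 \<le> g" "0 \<le> t" "t \<le> 1"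
  shows "threshold_value {0, 1, 2} (three_signal b g) t = max 0 (- t * b + (1 - t) * (1 - g)) + (1 - t) * g"
  using assms unfolding threshold_value_def binary_value_def three_signal_def
  by (simp add: mult_nonneg_nonneg mult_nonpos_nonneg)

lemma kink_experiment:
  assumes t0: "0 < t0" "t0 < 1" and v: "1 - 2 * t0 \<le> v" "0 \<le> v" "v \<le> 1 - t0"
  obtains W S where "is_experiment W S"
    and "\<And>t. 0 \<le> t \<Longrightarrow> t \<le> 1 \<Longrightarrow> threshold_value W S t = kink t0 v t"
proof
  define g where "g = v / (1 - t0)"
  define b where "b = (1 - t0) * (1 - g) / t0"
  have g: "0 \<le> g" "g \<le> 1" "v = (1 - t0) * g"
    using t0 v unfolding g_def by (auto simp: field_simps)
  have b: "0 \<le> b" "b \<le> 1" "t0 * (b + 1 - g) = 1 - g"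
    using t0 g v unfolding b_def by (auto simp: field_simps)
  show "is_experiment {0, 1, 2} (three_signal b g)"
    using b g by (intro is_experiment_three_signal)
  fix t :: real assume t: "0 \<le> t" "t \<le> 1"
  have "- t * b + (1 - t) * (1 - g) = (t0 - t) * (b + 1 - g)"
    using b(3) by (simp add: algebra_simps)
  then have H: "threshold_value {0, 1, 2} (three_signal b g) t
      = max 0 ((t0 - t) * (b + 1 - g)) + (1 - t) * g"
    using threshold_value_three_signal[OF b(1,2) g(1) t] by simp
  show "threshold_value {0, 1, 2} (three_signal b g) t = kink t0 v t"
  proof (cases "t \<le> t0")
    case True
    then have "max 0 ((t0 - t) * (b + 1 - g)) = (t0 - t) * (b + 1 - g)"
      using b g by simp
    moreover have "t0 * ((t0 - t) * (b + 1 - g) + (1 - t) * g) = (t0 - t) * (1 - g) + t0 * (1 - t) * g"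
      using b(3) by (metis distrib_left mult.assoc mult.left_commute)
    moreover have "\<dots> = t0 - (1 - v) * t"
      unfolding g(3) by (simp add: algebra_simps)
    ultimately show ?thesis
      using True t0 unfolding H kink_def by (simp add: field_simps)
  next
    case False
    then have "max 0 ((t0 - t) * (b + 1 - g)) = 0"
      using b g by (simp add: mult_nonpos_nonneg)
    then show ?thesis
      using False t0 g(3) unfolding H kink_def by simp
  qed
qed

lemma binary_value_upper_bound_attaining:
  assumes P: "is_experiment Y P" and Q: "is_experiment Z Q"
  obtains W S where "is_experiment W S"
    and "\<And>e1 e2. binary_value Y P e1 e2 \<le> binary_value W S e1 e2"
    and "\<And>e1 e2. binary_value Z Q e1 e2 \<le> binary_value W S e1 e2"
    and "binary_value W S d1 d2 = max (binary_value Y P d1 d2) (binary_value Z Q d1 d2)"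
proof -
  obtain t k c where t: "0 < t" "t < 1" "0 \<le> k"
    and eq: "\<And>X R. is_experiment X R \<Longrightarrow> binary_value X R d1 d2 = k * threshold_value X R t + c"
    using binary_value_eq_threshold_value_affine[of d1 d2] by blast
  define v where "v = max (threshold_value Y P t) (threshold_value Z Q t)"
  have "1 - 2 * t \<le> v" "0 \<le> v" "v \<le> 1 - t"
    using threshold_value_bounds[OF P, of t] threshold_value_bounds[OF Q, of t] t
    unfolding v_def by auto
  then obtain W S where S: "is_experiment W S"
    and S_kink: "\<And>s. 0 \<le> s \<Longrightarrow> s \<le> 1 \<Longrightarrow> threshold_value W S s = kink t v s"
    using kink_experiment[OF t(1,2)] by blast
  have dominates: "binary_value X R e1 e2 \<le> binary_value W S e1 e2"
    if X: "is_experiment X R" "threshold_value X R t \<le> v" for X R e1 e2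
    using threshold_value_le_kink[OF X(1) t(1,2) X(2)] S_kink
    by (intro binary_value_le_if_threshold_value_le[OF X(1) S]) auto
  have "threshold_value W S t = v"
    using S_kink[of t] t by (simp add: kink_def)
  then have "binary_value W S d1 d2 = max (binary_value Y P d1 d2) (binary_value Z Q d1 d2)"
    unfolding eq[OF S] eq[OF P] eq[OF Q] v_def
    using t(3) by (simp add: max_mult_distrib_left max_add_distrib_left)
  then show thesis
    using that S dominates[OF P] dominates[OF Q] unfolding v_def by auto
qed

lemma blackwell_sup_iff_binary_value_max:
  assumes P: "is_experiment YP P" and Q: "is_experiment YQ Q" and R: "is_experiment YR R"
  shows "blackwell_sup YR R [(YP, P), (YQ, Q)] \<longleftrightarrow>
    (\<forall>e1 e2. binary_value YR R e1 e2 = max (binary_value YP P e1 e2) (binary_value YQ Q e1 e2))"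
  (is "_ \<longleftrightarrow> (\<forall>e1 e2. ?max e1 e2)")
proof
  assume sup: "blackwell_sup YR R [(YP, P), (YQ, Q)]"
  show "\<forall>e1 e2. ?max e1 e2"
  proof (intro allI)
    fix d1 d2
    obtain W S where S: "is_experiment W S"
      and "\<And>e1 e2. binary_value YP P e1 e2 \<le> binary_value W S e1 e2"
        "\<And>e1 e2. binary_value YQ Q e1 e2 \<le> binary_value W S e1 e2"
      and S_max: "binary_value W S d1 d2 = max (binary_value YP P d1 d2) (binary_value YQ Q d1 d2)"
      using binary_value_upper_bound_attaining[OF P Q] by metis
    then have "more_informative W S YP P" "more_informative W S YQ Q"
      using more_informative_iff_binary_value_le[OF S] P Q by auto
    then have "binary_value YR R d1 d2 \<le> binary_value W S d1 d2"
      using sup S more_informative_imp_binary_value_le unfolding blackwell_sup_def by auto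
    moreover have "binary_value YP P d1 d2 \<le> binary_value YR R d1 d2"
      "binary_value YQ Q d1 d2 \<le> binary_value YR R d1 d2"
      using sup more_informative_imp_binary_value_le unfolding blackwell_sup_def by auto
    ultimately show "?max d1 d2"
      using S_max by linarith
  qed
next
  assume "\<forall>e1 e2. ?max e1 e2"
  then show "blackwell_sup YR R [(YP, P), (YQ, Q)]"
    unfolding blackwell_sup_def
    using more_informative_iff_binary_value_le[OF R P] more_informative_iff_binary_value_le[OF R Q]
      more_informative_iff_binary_value_le[OF _ P] more_informative_iff_binary_value_le[OF _ Q]
      more_informative_iff_binary_value_le[OF _ R]
    by auto
qed

section \<open>Support functions of convex sets\<close>

definition attains_support :: "'n::real_inner set \<Rightarrow> ('n \<Rightarrow> real) \<Rightarrow> bool" where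
  "attains_support K h \<longleftrightarrow> (\<forall>z. (\<forall>x\<in>K. z \<bullet> x \<le> h z) \<and> (\<exists>x\<in>K. z \<bullet> x = h z))"

lemma attains_support_unique: "attains_support K h \<Longrightarrow> attains_support K h' \<Longrightarrow> h = h'"
  unfolding attains_support_def by (metis order_antisym ext)

lemma subset_if_support_le:
  fixes K M :: "'n::euclidean_space set"
  assumes "closed M" "convex M" and K: "attains_support K hK" and M: "attains_support M hM"
    and le: "\<And>z. hK z \<le> hM z"
  shows "K \<subseteq> M"
proof
  fix x assume x: "x \<in> K"
  show "x \<in> M"
  proof (rule ccontr)
    assume "x \<notin> M"
    then obtain a b where "a \<bullet> x < b" "\<forall>y\<in>M. b < a \<bullet> y"
      using separating_hyperplane_closed_point[OF assms(2,1)] by blast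
    moreover obtain y where "y \<in> M" "(- a) \<bullet> y = hM (- a)"
      using M unfolding attains_support_def by blast
    moreover have "(- a) \<bullet> x \<le> hK (- a)"
      using K x unfolding attains_support_def by blast
    ultimately show False
      using le[of "- a"] by auto
  qed
qed

lemma attains_support_convex_hull_Un:
  assumes K: "attains_support K hK" and L: "attains_support L hL"
  shows "attains_support (convex hull (K \<union> L)) (\<lambda>z. max (hK z) (hL z))"
  unfolding attains_support_def
proof (intro allI conjI ballI)
  fix z
  have "K \<union> L \<subseteq> {x. z \<bullet> x \<le> max (hK z) (hL z)}"
    using K L unfolding attains_support_def by (force simp: le_max_iff_disj)
  then have "convex hull (K \<union> L) \<subseteq> {x. z \<bullet> x \<le> max (hK z) (hL z)}"
    by (intro hull_minimal convex_halfspace_le)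
  then show "z \<bullet> x \<le> max (hK z) (hL z)" if "x \<in> convex hull (K \<union> L)" for x
    using that by auto
  obtain xK xL where "xK \<in> K" "z \<bullet> xK = hK z" "xL \<in> L" "z \<bullet> xL = hL z"
    using K L unfolding attains_support_def by metis
  then show "\<exists>x\<in>convex hull (K \<union> L). z \<bullet> x = max (hK z) (hL z)"
    by (metis UnI1 UnI2 hull_inc max_def)
qed

lemma eq_convex_hull_Un_iff_support_max:
  fixes K L M :: "'n::euclidean_space set"
  assumes "compact K" "compact L" "closed M" "convex M"
    and K: "attains_support K hK" and L: "attains_support L hL" and M: "attains_support M hM"
  shows "M = convex hull (K \<union> L) \<longleftrightarrow> (\<forall>z. hM z = max (hK z) (hL z))"
proof
  note hull = attains_support_convex_hull_Un[OF K L]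
  show "\<forall>z. hM z = max (hK z) (hL z)" if "M = convex hull (K \<union> L)"
    using attains_support_unique[OF M] hull that by metis
  assume max: "\<forall>z. hM z = max (hK z) (hL z)"
  have "closed (convex hull (K \<union> L))"
    using assms(1,2) by (intro compact_imp_closed compact_convex_hull compact_Un)
  then have "M \<subseteq> convex hull (K \<union> L)"
    using max by (intro subset_if_support_le[OF _ _ M hull]) simp_all
  moreover have "K \<subseteq> M" "L \<subseteq> M"
    using max
    by (auto intro!: subset_if_support_le[OF assms(3,4) K M] subset_if_support_le[OF assms(3,4) L M])
  then have "convex hull (K \<union> L) \<subseteq> M"
    using assms(4) by (intro hull_minimal) auto
  ultimately show "M = convex hull (K \<union> L)" by blast
qed

section \<open>Feasible sets and their support functions\<close>

definition induced_rule :: "nat set \<Rightarrow> ('s::finite \<Rightarrow> nat \<Rightarrow> real) \<Rightarrow> (nat \<Rightarrow> 'a::finite \<Rightarrow> real)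
    \<Rightarrow> real^('s \<times> 'a)" where
  "induced_rule Y P \<sigma> = (\<chi> i. \<Sum>y\<in>Y. \<sigma> y (snd i) * P (fst i) y)"

lemma feasible_eq_induced_rules: "feasible Y P = {induced_rule Y P \<sigma> | \<sigma>. strategy Y UNIV \<sigma>}"
  unfolding feasible_def induced_rule_def by simp

lemma convex_feasible: "convex (feasible Y P :: (real^('s::finite \<times> 'a::finite)) set)"
  unfolding convex_def feasible_eq_induced_rules
proof (intro ballI allI impI, elim CollectE exE conjE)
  fix x x' :: "real^('s \<times> 'a)" and \<sigma> \<sigma>' and u v :: real
  assume uv: "0 \<le> u" "0 \<le> v" "u + v = 1"
    and \<sigma>: "x = induced_rule Y P \<sigma>" "strategy Y UNIV \<sigma>"
    and \<sigma>': "x' = induced_rule Y P \<sigma>'" "strategy Y UNIV \<sigma>'"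
  define \<tau> where "\<tau> y a = u * \<sigma> y a + v * \<sigma>' y a" for y a
  have "strategy Y (UNIV :: 'a set) \<tau>"
    using \<sigma>(2) \<sigma>'(2) uv
    by (auto simp: strategy_def is_dist_def \<tau>_def sum.distrib sum_distrib_left[symmetric])
  moreover have "u *\<^sub>R x + v *\<^sub>R x' = induced_rule Y P \<tau>"
    unfolding \<sigma>(1) \<sigma>'(1) induced_rule_def vec_eq_iff
    by (simp add: \<tau>_def sum_distrib_left sum.distrib[symmetric] algebra_simps)
  ultimately show "u *\<^sub>R x + v *\<^sub>R x' \<in> {induced_rule Y P \<sigma> |\<sigma>. strategy Y UNIV \<sigma>}"
    by blast
qed

lemma compact_distribution_vectors:
  "compact {q :: real^'a::finite. (\<forall>a. 0 \<le> q $ a) \<and> (\<Sum>a\<in>UNIV. q $ a) = 1}"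
proof (subst compact_eq_bounded_closed, rule conjI)
  show "bounded {q :: real^'a. (\<forall>a. 0 \<le> q $ a) \<and> (\<Sum>a\<in>UNIV. q $ a) = 1}"
  proof (rule bounded_subset[OF bounded_cbox], intro subsetI)
    fix q :: "real^'a" assume "q \<in> {q. (\<forall>a. 0 \<le> q $ a) \<and> (\<Sum>a\<in>UNIV. q $ a) = 1}"
    then have "0 \<le> q $ a \<and> q $ a \<le> 1" for a
      using member_le_sum[of a UNIV "\<lambda>a. q $ a"] by auto
    then show "q \<in> cbox 0 (\<chi> a. 1)"
      by (simp add: mem_box_cart)
  qed
  show "closed {q :: real^'a. (\<forall>a. 0 \<le> q $ a) \<and> (\<Sum>a\<in>UNIV. q $ a) = 1}"
    by (intro closed_Collect_conj closed_Collect_all closed_Collect_le closed_Collect_eq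
        continuous_intros)
qed

lemma compact_feasible:
  assumes "finite Y"
  shows "compact (feasible Y P :: (real^('s::finite \<times> 'a::finite)) set)"
  using assms
proof (induction Y rule: finite_induct)
  case empty
  have "feasible {} P = {0 :: real^('s \<times> 'a)}"
    unfolding feasible_eq_induced_rules induced_rule_def by (auto simp: strategy_def vec_eq_iff)
  then show ?case by simp
next
  case (insert y Y)
  define D where "D = {q :: real^'a. (\<forall>a. 0 \<le> q $ a) \<and> (\<Sum>a\<in>UNIV. q $ a) = 1}"
  define signal :: "real^'a \<Rightarrow> real^('s \<times> 'a)" where "signal q = (\<chi> i. q $ snd i * P (fst i) y)" for q
  have "feasible (insert y Y) P = {s + x | s x. s \<in> signal ` D \<and> x \<in> feasible Y P}"
  proof (intro set_eqI iffI)
    fix z :: "real^('s \<times> 'a)" assume "z \<in> feasible (insert y Y) P"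
    then obtain \<sigma> where \<sigma>: "strategy (insert y Y) (UNIV :: 'a set) \<sigma>" "z = induced_rule (insert y Y) P \<sigma>"
      unfolding feasible_eq_induced_rules by auto
    have "(\<chi> a. \<sigma> y a) \<in> D" "induced_rule Y P \<sigma> \<in> feasible Y P"
      using \<sigma>(1) unfolding D_def feasible_eq_induced_rules strategy_def is_dist_def by auto
    moreover have "z = signal (\<chi> a. \<sigma> y a) + induced_rule Y P \<sigma>"
      unfolding \<sigma>(2) induced_rule_def signal_def vec_eq_iff using insert.hyps by simp
    ultimately show "z \<in> {s + x | s x. s \<in> signal ` D \<and> x \<in> feasible Y P}"
      by blast
  next
    fix z :: "real^('s \<times> 'a)" assume "z \<in> {s + x | s x. s \<in> signal ` D \<and> x \<in> feasible Y P}"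
    then obtain q \<sigma> where q: "q \<in> D" and \<sigma>: "strategy Y (UNIV :: 'a set) \<sigma>"
      and z: "z = signal q + induced_rule Y P \<sigma>"
      unfolding feasible_eq_induced_rules by auto
    define \<sigma>' where "\<sigma>' = \<sigma>(y := (\<lambda>a. q $ a))"
    have "strategy (insert y Y) UNIV \<sigma>'"
      using \<sigma> q unfolding strategy_def is_dist_def D_def \<sigma>'_def by auto
    moreover have "(\<Sum>x\<in>Y. \<sigma>' x a * P \<theta> x) = (\<Sum>x\<in>Y. \<sigma> x a * P \<theta> x)" for a \<theta>
      using insert.hyps unfolding \<sigma>'_def by (intro sum.cong) auto
    then have "z = induced_rule (insert y Y) P \<sigma>'"
      unfolding z induced_rule_def signal_def vec_eq_iff using insert.hyps by (simp add: \<sigma>'_def)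
    ultimately show "z \<in> feasible (insert y Y) P"
      unfolding feasible_eq_induced_rules by blast
  qed
  moreover have "compact (signal ` D)"
    unfolding D_def signal_def
    by (intro compact_continuous_image compact_distribution_vectors continuous_on_vec_lambda
        continuous_intros)
  ultimately show ?case
    using insert.IH by (simp add: compact_sums)
qed

definition feasible_support :: "nat set \<Rightarrow> ('s::finite \<Rightarrow> nat \<Rightarrow> real) \<Rightarrow> real^('s \<times> 'a::finite) \<Rightarrow> real" where
  "feasible_support Y P z = (\<Sum>y\<in>Y. Max ((\<lambda>a. \<Sum>\<theta>\<in>UNIV. z $ (\<theta>, a) * P \<theta> y) ` UNIV))"

lemma inner_induced_rule:
  "z \<bullet> induced_rule Y P \<sigma> = (\<Sum>y\<in>Y. \<Sum>a\<in>UNIV. \<sigma> y a * (\<Sum>\<theta>\<in>UNIV. z $ (\<theta>, a) * P \<theta> y))"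
proof -
  have "z \<bullet> induced_rule Y P \<sigma> = (\<Sum>\<theta>\<in>UNIV. \<Sum>a\<in>UNIV. \<Sum>y\<in>Y. \<sigma> y a * (z $ (\<theta>, a) * P \<theta> y))"
    unfolding inner_vec_def induced_rule_def UNIV_Times_UNIV[symmetric] sum.cartesian_product'
    by (simp add: sum_distrib_left mult.left_commute)
  also have "\<dots> = (\<Sum>a\<in>UNIV. \<Sum>y\<in>Y. \<Sum>\<theta>\<in>UNIV. \<sigma> y a * (z $ (\<theta>, a) * P \<theta> y))"
    by (subst sum.swap) (intro sum.cong refl sum.swap)
  also have "\<dots> = (\<Sum>y\<in>Y. \<Sum>a\<in>UNIV. \<sigma> y a * (\<Sum>\<theta>\<in>UNIV. z $ (\<theta>, a) * P \<theta> y))"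
    by (subst sum.swap) (simp add: sum_distrib_left)
  finally show ?thesis .
qed

lemma attains_support_feasible:
  "attains_support (feasible Y P :: (real^('s::finite \<times> 'a::finite)) set) (feasible_support Y P)"
  unfolding attains_support_def
proof (intro allI conjI ballI)
  fix z :: "real^('s \<times> 'a)"
  show "z \<bullet> x \<le> feasible_support Y P z" if x: "x \<in> feasible Y P" for x
  proof -
    obtain \<sigma> where \<sigma>: "strategy Y (UNIV :: 'a set) \<sigma>" "x = induced_rule Y P \<sigma>"
      using x unfolding feasible_eq_induced_rules by auto
    show ?thesis
      using strategy_payoff_le_sum_Max[OF \<sigma>(1) finite_class.finite_UNIV,
          of "\<lambda>y a. \<Sum>\<theta>\<in>UNIV. z $ (\<theta>, a) * P \<theta> y"]
      unfolding \<sigma>(2) feasible_support_def inner_induced_rule .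
  qed
  obtain \<sigma> :: "nat \<Rightarrow> 'a \<Rightarrow> real" where \<sigma>: "strategy Y UNIV \<sigma>"
    "(\<Sum>y\<in>Y. \<Sum>a\<in>UNIV. \<sigma> y a * (\<Sum>\<theta>\<in>UNIV. z $ (\<theta>, a) * P \<theta> y)) = feasible_support Y P z"
    unfolding feasible_support_def by (rule strategy_payoff_attains_sum_Max[of "UNIV :: 'a set"]) simp_all
  then have "z \<bullet> induced_rule Y P \<sigma> = feasible_support Y P z"
    unfolding inner_induced_rule by simp
  with \<sigma> show "\<exists>x\<in>feasible Y P. z \<bullet> x = feasible_support Y P z"
    unfolding feasible_eq_induced_rules by blast
qed

lemma feasible_support_two_actions:
  fixes P :: "2 \<Rightarrow> nat \<Rightarrow> real" and z :: "real^(2 \<times> 'a::finite)"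
  assumes U: "(UNIV :: 'a set) = {a0, a1}" "a0 \<noteq> a1" and E: "is_experiment Y P"
  shows "feasible_support Y P z = z $ (1, a1) + z $ (2, a1)
    + binary_value Y P (z $ (1, a0) - z $ (1, a1)) (z $ (2, a0) - z $ (2, a1))"
proof -
  have "feasible_support Y P z = (\<Sum>y\<in>Y. (z $ (1, a1) * P 1 y + z $ (2, a1) * P 2 y)
      + max 0 ((z $ (1, a0) - z $ (1, a1)) * P 1 y + (z $ (2, a0) - z $ (2, a1)) * P 2 y))"
    unfolding feasible_support_def U(1) sum_2
    by (intro sum.cong refl) (auto simp: max_def algebra_simps)
  also have "\<dots> = (\<Sum>y\<in>Y. z $ (1, a1) * P 1 y + z $ (2, a1) * P 2 y)
      + binary_value Y P (z $ (1, a0) - z $ (1, a1)) (z $ (2, a0) - z $ (2, a1))"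
    unfolding binary_value_def by (rule sum.distrib)
  finally show ?thesis
    unfolding experiment_sum_linear[OF E] .
qed

lemma feasible_eq_convex_hull_iff_binary_value_max:
  fixes a0 a1 :: "'a::finite"
  assumes U: "(UNIV :: 'a set) = {a0, a1}" "a0 \<noteq> a1"
    and P: "is_experiment YP P" and Q: "is_experiment YQ Q" and R: "is_experiment YR R"
  shows "(feasible YR R :: (real^(2 \<times> 'a)) set) = convex hull (feasible YP P \<union> feasible YQ Q)
    \<longleftrightarrow> (\<forall>e1 e2. binary_value YR R e1 e2 = max (binary_value YP P e1 e2) (binary_value YQ Q e1 e2))"
proof -
  note support = feasible_support_two_actions[OF U]
  have "(feasible YR R :: (real^(2 \<times> 'a)) set) = convex hull (feasible YP P \<union> feasible YQ Q)
    \<longleftrightarrow> (\<forall>z :: real^(2 \<times> 'a). feasible_support YR R z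
          = max (feasible_support YP P z) (feasible_support YQ Q z))"
    using P Q R
    by (intro eq_convex_hull_Un_iff_support_max compact_feasible compact_imp_closed
        convex_feasible attains_support_feasible experiment_finite)
  also have "\<dots> \<longleftrightarrow> (\<forall>e1 e2. binary_value YR R e1 e2 = max (binary_value YP P e1 e2) (binary_value YQ Q e1 e2))"
  proof
    assume max: "\<forall>z :: real^(2 \<times> 'a). feasible_support YR R z
      = max (feasible_support YP P z) (feasible_support YQ Q z)"
    show "\<forall>e1 e2. binary_value YR R e1 e2 = max (binary_value YP P e1 e2) (binary_value YQ Q e1 e2)"
    proof (intro allI)
      fix d1 d2
      define z :: "real^(2 \<times> 'a)" where
        "z = (\<chi> i. if snd i = a0 then (if fst i = 1 then d1 else d2) else 0)"
      show "binary_value YR R d1 d2 = max (binary_value YP P d1 d2) (binary_value YQ Q d1 d2)"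
        using max[rule_format, of z] U(2) unfolding support[OF P] support[OF Q] support[OF R]
        by (simp add: z_def)
    qed
  qed (simp add: support[OF P] support[OF Q] support[OF R] max_add_distrib_right)
  finally show ?thesis .
qed

theorem lemma2:
  fixes YP YQ YR :: "nat set"
    and P Q R :: "2 \<Rightarrow> nat \<Rightarrow> real"
  assumes "CARD('a::finite) = 2"
    and "is_experiment YP P" and "is_experiment YQ Q" and "is_experiment YR R"
  shows "blackwell_sup YR R [(YP, P), (YQ, Q)] \<longleftrightarrow>
         (feasible YR R :: (real^(2 \<times> 'a)) set) =
           convex hull (feasible YP P \<union> feasible YQ Q)"
proof -
  obtain a0 a1 :: 'a where U: "(UNIV :: 'a set) = {a0, a1}" "a0 \<noteq> a1"
    using assms(1) card_2_iff[of "UNIV :: 'a set"] by auto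
  show ?thesis
    unfolding blackwell_sup_iff_binary_value_max[OF assms(2-4)]
      feasible_eq_convex_hull_iff_binary_value_max[OF U assms(2-4)] ..
qed

end
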